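(* Let $\langle m;\Delta\rangle$ be a balanced ball (which is a number), where $m=\frac{a}{2^p}\neq 0$ with $a$ an odd integer and $p\ge 0$ an integer, or with $p=0$ and $a$ any nonzero integer. Then $-\frac{1}{2^p}\le\Delta<0$.
   Context: Games are short normal-play combinatorial games; a number is a game $G$ with $G^L<G<G^R$ for all options, and short number values are identified with dyadic rationals $\frac{a}{2^p}$. For numbers $m,\Delta$, the ball $\langle m;\Delta\rangle$ is the game $\{x\mid y\}$ where $x,y$ are the canonical forms of $m+\Delta$ and $m-\Delta$; balls are only considered when they are numbers, which forces $\Delta<0$. A ball is balanced if $\langle m;\Delta\rangle+\langle m;\Delta\rangle=m+m$ (disjunctive sum, equality of values). *)

theory Defs
  imports Complex_Main
begin

text \<open>A short game is given by finite lists of Left and Right options.\<close>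
datatype game = G "game list" "game list"

lemma size_opt_less:
  "x \<in> set xs \<Longrightarrow> size x < Suc (size_list size xs + size_list size ys)"
  "x \<in> set ys \<Longrightarrow> size x < Suc (size_list size xs + size_list size ys)"
  by (auto dest: size_list_estimation'[of _ _ _ size, OF _ order_refl])

function game_le :: "game \<Rightarrow> game \<Rightarrow> bool" where
  "game_le (G gl gr) (G hl hr) \<longleftrightarrow>
     (\<forall>x\<in>set gl. \<not> game_le (G hl hr) x) \<and> (\<forall>y\<in>set hr. \<not> game_le y (G gl gr))"
  by pat_completeness auto
termination
  by (relation "measure (\<lambda>(g,h). size g + size h)")
     (auto dest: size_opt_less)

definition game_eq :: "game \<Rightarrow> game \<Rightarrow> bool" where
  "game_eq g h \<longleftrightarrow> game_le g h \<and> game_le h g"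

definition game_less :: "game \<Rightarrow> game \<Rightarrow> bool" where
  "game_less g h \<longleftrightarrow> game_le g h \<and> \<not> game_le h g"

function game_add :: "game \<Rightarrow> game \<Rightarrow> game" where
  "game_add (G al ar) (G bl br) =
     G (map (\<lambda>x. game_add x (G bl br)) al @ map (\<lambda>y. game_add (G al ar) y) bl)
       (map (\<lambda>x. game_add x (G bl br)) ar @ map (\<lambda>y. game_add (G al ar) y) br)"
  by pat_completeness auto
termination
  by (relation "measure (\<lambda>(g,h). size g + size h)")
     (auto dest: size_opt_less)

fun game_neg :: "game \<Rightarrow> game" where
  "game_neg (G gl gr) = G (map game_neg gr) (map game_neg gl)"

definition is_number :: "game \<Rightarrow> bool" where
  "is_number g \<longleftrightarrow> (case g of G gl gr \<Rightarrow>
      (\<forall>x\<in>set gl. game_less x g) \<and> (\<forall>y\<in>set gr. game_less g y))"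

fun canon_nat :: "nat \<Rightarrow> game" where
  "canon_nat 0 = G [] []"
| "canon_nat (Suc k) = G [canon_nat k] []"

definition canon_int :: "int \<Rightarrow> game" where
  "canon_int n = (if n \<ge> 0 then canon_nat (nat n) else game_neg (canon_nat (nat (- n))))"

text \<open>Canonical form of b/2^q: if b is odd and q \<ge> 1, it is
  {(b-1)/2^q | (b+1)/2^q}; if b is even we reduce the fraction.\<close>
fun canon_dy :: "int \<Rightarrow> nat \<Rightarrow> game" where
  "canon_dy b 0 = canon_int b"
| "canon_dy b (Suc q) =
     (if even b then canon_dy (b div 2) q
      else G [canon_dy ((b - 1) div 2) q] [canon_dy ((b + 1) div 2) q])"

definition is_dyadic :: "rat \<Rightarrow> bool" where
  "is_dyadic r \<longleftrightarrow> (\<exists>(b::int) (q::nat). r = of_int b / 2 ^ q)"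

definition dyadic_exp :: "rat \<Rightarrow> nat" where
  "dyadic_exp r = (LEAST q::nat. \<exists>b::int. r = of_int b / 2 ^ q)"

text \<open>Canonical form of a dyadic rational (meaningful only for dyadic r).\<close>
definition canon :: "rat \<Rightarrow> game" where
  "canon r = canon_dy \<lfloor>r * 2 ^ dyadic_exp r\<rfloor> (dyadic_exp r)"

definition ball :: "rat \<Rightarrow> rat \<Rightarrow> game" where
  "ball m \<Delta> = G [canon (m + \<Delta>)] [canon (m - \<Delta>)]"

definition balanced :: "rat \<Rightarrow> rat \<Rightarrow> bool" where
  "balanced m \<Delta> \<longleftrightarrow>
     game_eq (game_add (ball m \<Delta>) (ball m \<Delta>)) (game_add (canon m) (canon m))"

end

theory Submission
  imports Defs
begin

text \<open>Since the ball \<open>g = {m + \<Delta> | m - \<Delta>}\<close> is a number, \<open>m + \<Delta> < m - \<Delta>\<close>, so \<open>\<Delta> < 0\<close>.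
  If \<open>\<Delta> < -1/2^p\<close>, the interval \<open>(m + \<Delta>, m - \<Delta>)\<close> contains \<open>m\<close> together with its
  canonical options \<open>m \<plusminus> 1/2^p\<close>, and by the simplicity theorem \<open>g\<close> equals the simplest
  dyadic \<open>w\<close> of the interval. Descending from \<open>m\<close> through options shows that \<open>w\<close> is
  simpler than \<open>m\<close>, hence lies at or beyond a Left option \<open>m\<^sup>L\<close> or a Right option
  \<open>m\<^sup>R\<close> of \<open>m\<close>. In the first case \<open>g + g \<le> m\<^sup>L + m\<close>, a Left option of \<open>m + m\<close>, so
  \<open>m + m \<le> g + g\<close> fails; the second case is symmetric.\<close>

section \<open>Dyadic grids\<close>

definition dyadic_grid :: "nat \<Rightarrow> rat set" where
  "dyadic_grid k = {r. \<exists>b::int. r = of_int b / 2 ^ k}"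

lemma is_dyadic_iff_grid: "is_dyadic r \<longleftrightarrow> (\<exists>k. r \<in> dyadic_grid k)"
  by (auto simp: is_dyadic_def dyadic_grid_def)

lemma dyadic_exp_grid: "is_dyadic r \<Longrightarrow> r \<in> dyadic_grid (dyadic_exp r)"
  unfolding dyadic_exp_def dyadic_grid_def is_dyadic_def mem_Collect_eq by (rule LeastI_ex) auto

lemma dyadic_exp_le: "r \<in> dyadic_grid k \<Longrightarrow> dyadic_exp r \<le> k"
  unfolding dyadic_exp_def dyadic_grid_def by (rule Least_le) auto

lemma dyadic_grid_mono:
  assumes "k \<le> j" shows "dyadic_grid k \<subseteq> dyadic_grid j"
proof
  fix r assume "r \<in> dyadic_grid k"
  then obtain b where "r = of_int b / 2 ^ k" by (auto simp: dyadic_grid_def)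
  moreover have "(2::rat) ^ j = 2 ^ k * 2 ^ (j - k)"
    using assms by (simp flip: power_add)
  ultimately have "r = of_int (b * 2 ^ (j - k)) / 2 ^ j" by simp
  then show "r \<in> dyadic_grid j" unfolding dyadic_grid_def by blast
qed

lemma dyadic_grid_plus_minus:
  assumes "r \<in> dyadic_grid k"
  shows "r - 1 / 2 ^ k \<in> dyadic_grid k" and "r + 1 / 2 ^ k \<in> dyadic_grid k"
proof -
  obtain b where b: "r = of_int b / 2 ^ k" using assms by (auto simp: dyadic_grid_def)
  have "r - 1 / 2 ^ k = of_int (b - 1) / 2 ^ k" "r + 1 / 2 ^ k = of_int (b + 1) / 2 ^ k"
    using b by (simp_all add: diff_divide_distrib add_divide_distrib)
  then show "r - 1 / 2 ^ k \<in> dyadic_grid k" "r + 1 / 2 ^ k \<in> dyadic_grid k"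
    unfolding dyadic_grid_def by blast+
qed

lemma dyadic_grid_less_imp_le_minus:
  assumes "r \<in> dyadic_grid k" "s \<in> dyadic_grid k" "s < r"
  shows "s \<le> r - 1 / 2 ^ k"
proof -
  obtain b c where b: "r = of_int b / 2 ^ k" and c: "s = of_int c / 2 ^ k"
    using assms(1,2) by (auto simp: dyadic_grid_def)
  then have "c < b" using assms(3) by (simp add: divide_less_cancel)
  then have "of_int c / 2 ^ k \<le> (of_int b - 1 :: rat) / 2 ^ k"
    by (intro divide_right_mono) simp_all
  then show ?thesis using b c by (simp add: diff_divide_distrib)
qed

lemma is_dyadic_add_diff:
  assumes "is_dyadic r" "is_dyadic s"
  shows "is_dyadic (r + s)" and "is_dyadic (r - s)"
proof -
  obtain k j where "r \<in> dyadic_grid k" "s \<in> dyadic_grid j"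
    using assms by (auto simp: is_dyadic_iff_grid)
  then have "r \<in> dyadic_grid (k + j)" "s \<in> dyadic_grid (k + j)"
    using dyadic_grid_mono[of k "k + j"] dyadic_grid_mono[of j "k + j"] by auto
  then obtain b c where b: "r = of_int b / 2 ^ (k + j)" and c: "s = of_int c / 2 ^ (k + j)"
    by (auto simp: dyadic_grid_def)
  have "r + s = of_int (b + c) / 2 ^ (k + j)" "r - s = of_int (b - c) / 2 ^ (k + j)"
    using b c by (simp_all add: add_divide_distrib diff_divide_distrib)
  then show "is_dyadic (r + s)" "is_dyadic (r - s)" unfolding is_dyadic_def by blast+
qed

lemma dyadic_exp_of_int: "dyadic_exp (of_int n) = 0"
  using dyadic_exp_le[of "of_int n" 0] by (simp add: dyadic_grid_def)

lemma dyadic_exp_odd_numerator: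
  assumes "r = of_int b / 2 ^ dyadic_exp r" "0 < dyadic_exp r"
  shows "odd b"
proof
  assume "even b"
  then obtain c where "b = 2 * c" by blast
  then have "r = of_int c / 2 ^ (dyadic_exp r - 1)"
    using assms by (cases "dyadic_exp r") simp_all
  then have "dyadic_exp r \<le> dyadic_exp r - 1" by (intro dyadic_exp_le) (auto simp: dyadic_grid_def)
  then show False using assms(2) by simp
qed

lemma dyadic_exp_of_odd:
  assumes "odd b" shows "dyadic_exp (of_int b / 2 ^ q) = q"
proof -
  define e where "e = dyadic_exp (of_int b / 2 ^ q :: rat)"
  have "e \<le> q" unfolding e_def by (rule dyadic_exp_le) (auto simp: dyadic_grid_def)
  moreover have "\<not> e < q"
  proof
    assume less: "e < q"
    obtain c where c: "of_int b / 2 ^ q = (of_int c / 2 ^ e :: rat)"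
      using dyadic_exp_grid[of "of_int b / 2 ^ q"] by (auto simp: e_def is_dyadic_def dyadic_grid_def)
    have "(2::rat) ^ q = 2 ^ e * 2 ^ (q - e)" using less by (simp flip: power_add)
    with c have "of_int b = (of_int (c * 2 ^ (q - e)) :: rat)" by (simp add: field_simps)
    then have "b = c * 2 ^ (q - e)" by (simp only: of_int_eq_iff)
    then show False using assms less by simp
  qed
  ultimately show ?thesis by (simp add: e_def)
qed

section \<open>Games\<close>

fun left_opts :: "game \<Rightarrow> game list" where "left_opts (G l r) = l"
fun right_opts :: "game \<Rightarrow> game list" where "right_opts (G l r) = r"

lemma game_le_iff:
  "game_le a b \<longleftrightarrow>
     (\<forall>x\<in>set (left_opts a). \<not> game_le b x) \<and> (\<forall>y\<in>set (right_opts b). \<not> game_le y a)"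
  by (cases a; cases b) auto

lemma size_left_opt: "x \<in> set (left_opts a) \<Longrightarrow> size x < size a"
  by (cases a) (auto dest: size_opt_less)

lemma size_right_opt: "y \<in> set (right_opts a) \<Longrightarrow> size y < size a"
  by (cases a) (auto dest: size_opt_less)

lemma game_le_refl: "game_le g g"
proof (induction g)
  case (G l r)
  show ?case
  proof (subst game_le_iff, intro conjI ballI notI)
    fix x assume x: "x \<in> set (left_opts (G l r))" and "game_le (G l r) x"
    moreover have "game_le x x" using G.IH(1) x by simp
    ultimately show False by (subst (asm) game_le_iff) auto
  next
    fix y assume y: "y \<in> set (right_opts (G l r))" and "game_le y (G l r)"
    moreover have "game_le y y" using G.IH(2) y by simp
    ultimately show False by (subst (asm) game_le_iff) auto
  qed
qed

lemma game_le_trans [trans]: "game_le a b \<Longrightarrow> game_le b c \<Longrightarrow> game_le a c"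
proof (induction "size a + size b + size c" arbitrary: a b c rule: less_induct)
  case less
  show ?case
  proof (subst game_le_iff, intro conjI ballI notI)
    fix x assume x: "x \<in> set (left_opts a)" and "game_le c x"
    then have "game_le b x" using less.hyps[of b c x] less.prems(2) size_left_opt[OF x] by simp
    then show False using less.prems(1) x by (subst (asm) game_le_iff) auto
  next
    fix y assume y: "y \<in> set (right_opts c)" and "game_le y a"
    then have "game_le y b" using less.hyps[of y a b] less.prems(1) size_right_opt[OF y] by simp
    then show False using less.prems(2) y by (subst (asm) game_le_iff) auto
  qed
qed

lemma not_le_left_opt: "x \<in> set (left_opts a) \<Longrightarrow> \<not> game_le a x"
  using game_le_refl[of x] by (subst game_le_iff) auto

lemma not_right_opt_le: "y \<in> set (right_opts a) \<Longrightarrow> \<not> game_le y a"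
  using game_le_refl[of y] by (subst game_le_iff) auto

lemma game_le_if_options_dominated:
  assumes "\<forall>x\<in>set (left_opts a). \<exists>x'\<in>set (left_opts b). game_le x x'"
    and "\<forall>y\<in>set (right_opts b). \<exists>y'\<in>set (right_opts a). game_le y' y"
  shows "game_le a b"
  using assms not_le_left_opt not_right_opt_le game_le_trans
  by (subst game_le_iff) blast

lemma left_opts_add:
  "left_opts (game_add a b) = map (\<lambda>x. game_add x b) (left_opts a) @ map (game_add a) (left_opts b)"
  by (cases a; cases b) simp

lemma right_opts_add:
  "right_opts (game_add a b) = map (\<lambda>y. game_add y b) (right_opts a) @ map (game_add a) (right_opts b)"
  by (cases a; cases b) simp

lemma game_add_commute_le: "game_le (game_add a b) (game_add b a)"
proof (induction "size a + size b" arbitrary: a b rule: less_induct)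
  case less
  have IH: "game_le (game_add c d) (game_add d c)" if "size c + size d < size a + size b" for c d
    using less that by blast
  show ?case
  proof (rule game_le_if_options_dominated; intro ballI)
    fix x assume "x \<in> set (left_opts (game_add a b))"
    then consider c where "c \<in> set (left_opts a)" "x = game_add c b"
      | c where "c \<in> set (left_opts b)" "x = game_add a c"
      by (auto simp: left_opts_add)
    then show "\<exists>x'\<in>set (left_opts (game_add b a)). game_le x x'"
    proof cases
      case 1
      then show ?thesis using IH[of c b] size_left_opt[of c a] by (auto simp: left_opts_add)
    next
      case 2
      then show ?thesis using IH[of a c] size_left_opt[of c b] by (auto simp: left_opts_add)
    qed
  next
    fix y assume "y \<in> set (right_opts (game_add b a))"
    then consider c where "c \<in> set (right_opts b)" "y = game_add c a"
      | c where "c \<in> set (right_opts a)" "y = game_add b c"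
      by (auto simp: right_opts_add)
    then show "\<exists>y'\<in>set (right_opts (game_add a b)). game_le y' y"
    proof cases
      case 1
      then show ?thesis using IH[of a c] size_right_opt[of c b] by (auto simp: right_opts_add)
    next
      case 2
      then show ?thesis using IH[of c b] size_right_opt[of c a] by (auto simp: right_opts_add)
    qed
  qed
qed

lemma game_add_le_add_right_iff: "game_le (game_add a c) (game_add b c) \<longleftrightarrow> game_le a b"
proof (induction "size a + size b + size c" arbitrary: a b c rule: less_induct)
  case less
  have IH: "game_le (game_add a' c') (game_add b' c') \<longleftrightarrow> game_le a' b'"
    if "size a' + size b' + size c' < size a + size b + size c" for a' b' c'
    using less that by blast
  have opts_a: "game_le (game_add b c) (game_add x c) \<longleftrightarrow> game_le b x" if "x \<in> set (left_opts a)" for x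
    using IH[of b x c] size_left_opt[OF that] by simp
  have opts_b: "game_le (game_add y c) (game_add a c) \<longleftrightarrow> game_le y a" if "y \<in> set (right_opts b)" for y
    using IH[of y a c] size_right_opt[OF that] by simp
  have opts_c_left: "\<not> game_le (game_add b c) (game_add a z)"
    if "game_le a b" "z \<in> set (left_opts c)" for z
  proof
    assume "game_le (game_add b c) (game_add a z)"
    also have "game_le (game_add a z) (game_add b z)"
      using IH[of a b z] size_left_opt[OF that(2)] that(1) by simp
    finally have "game_le (game_add b c) (game_add b z)" .
    then show False using not_le_left_opt that(2) by (simp add: left_opts_add)
  qed
  have opts_c_right: "\<not> game_le (game_add b z) (game_add a c)"
    if "game_le a b" "z \<in> set (right_opts c)" for z
  proof
    have "game_le (game_add a z) (game_add b z)"
      using IH[of a b z] size_right_opt[OF that(2)] that(1) by simp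
    also assume "game_le (game_add b z) (game_add a c)"
    finally have "game_le (game_add a z) (game_add a c)" .
    then show False using not_right_opt_le that(2) by (simp add: right_opts_add)
  qed
  have "game_le (game_add a c) (game_add b c) \<longleftrightarrow> game_le a b
      \<and> (\<forall>z\<in>set (left_opts c). \<not> game_le (game_add b c) (game_add a z))
      \<and> (\<forall>z\<in>set (right_opts c). \<not> game_le (game_add b z) (game_add a c))"
    using opts_a opts_b game_le_iff[of a b]
    by (subst game_le_iff) (auto simp: left_opts_add right_opts_add)
  then show ?case using opts_c_left opts_c_right by blast
qed

lemma game_add_le_add_left_iff: "game_le (game_add c a) (game_add c b) \<longleftrightarrow> game_le a b"
  by (metis game_add_commute_le game_add_le_add_right_iff game_le_trans)

lemma not_double_le_if_le_left_opt:
  assumes "x \<in> set (left_opts h)" "game_le x h" "game_le g x"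
  shows "\<not> game_le (game_add h h) (game_add g g)"
proof
  assume "game_le (game_add h h) (game_add g g)"
  also have "game_le (game_add g g) (game_add x g)"
    using assms(3) game_add_le_add_right_iff by blast
  also have "game_le (game_add x g) (game_add x h)"
    using assms(2,3) game_add_le_add_left_iff game_le_trans by blast
  finally have "game_le (game_add h h) (game_add x h)" .
  then show False using not_le_left_opt assms(1) by (simp add: left_opts_add)
qed

lemma not_le_double_if_right_opt_le:
  assumes "y \<in> set (right_opts h)" "game_le h y" "game_le y g"
  shows "\<not> game_le (game_add g g) (game_add h h)"
proof
  have "game_le (game_add h y) (game_add g y)"
    using assms(2,3) game_add_le_add_right_iff game_le_trans by blast
  also have "game_le (game_add g y) (game_add g g)"
    using assms(3) game_add_le_add_left_iff by blast
  also assume "game_le (game_add g g) (game_add h h)"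
  finally have "game_le (game_add h y) (game_add h h)" .
  then show False using not_right_opt_le assms(1) by (simp add: right_opts_add)
qed

section \<open>Canonical forms of dyadic rationals\<close>

definition left_vals :: "rat \<Rightarrow> rat list" where
  "left_vals r = (if 0 < dyadic_exp r \<or> 0 < r then [r - 1 / 2 ^ dyadic_exp r] else [])"

definition right_vals :: "rat \<Rightarrow> rat list" where
  "right_vals r = (if 0 < dyadic_exp r \<or> r < 0 then [r + 1 / 2 ^ dyadic_exp r] else [])"

lemma canon_int_eq_G:
  "canon_int n = G (if 0 < n then [canon_int (n - 1)] else []) (if n < 0 then [canon_int (n + 1)] else [])"
proof -
  consider "0 < n" | "n = 0" | "n < 0" by linarith
  then show ?thesis
  proof cases
    case 1
    then have "nat n = Suc (nat (n - 1))" by simp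
    then show ?thesis using 1 by (simp add: canon_int_def)
  next
    case 2
    then show ?thesis by (simp add: canon_int_def)
  next
    case 3
    then have "nat (- n) = Suc (nat (- n - 1))" by simp
    then show ?thesis using 3 by (simp add: canon_int_def)
  qed
qed

lemma canon_of_int: "canon (of_int n) = canon_int n"
  by (simp add: canon_def dyadic_exp_of_int)

lemma canon_dy_eq_canon: "canon_dy b k = canon (of_int b / 2 ^ k)"
proof (induction k arbitrary: b)
  case 0
  then show ?case by (simp add: canon_of_int)
next
  case (Suc k)
  show ?case
  proof (cases "even b")
    case True
    then obtain c where c: "b = 2 * c" by blast
    then have "canon_dy b (Suc k) = canon (of_int c / 2 ^ k)" using Suc.IH by simp
    also have "of_int c / 2 ^ k = (of_int b / 2 ^ Suc k :: rat)" using c by simp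
    finally show ?thesis .
  next
    case False
    then show ?thesis unfolding canon_def dyadic_exp_of_odd[OF False] by simp
  qed
qed

lemma canon_eq_G:
  assumes "is_dyadic r"
  shows "canon r = G (map canon (left_vals r)) (map canon (right_vals r))"
proof -
  define k where "k = dyadic_exp r"
  obtain b where b: "r = of_int b / 2 ^ k"
    using dyadic_exp_grid[OF assms] by (auto simp: dyadic_grid_def k_def)
  then have "\<lfloor>r * 2 ^ k\<rfloor> = b" by simp
  then have canon_r: "canon r = canon_dy b k" unfolding canon_def k_def[symmetric] by simp
  show ?thesis
  proof (cases k)
    case 0
    then have "r = of_int b" using b by simp
    moreover have "canon (of_int b - 1) = canon_int (b - 1)" "canon (of_int b + 1) = canon_int (b + 1)"
      using canon_of_int[of "b - 1"] canon_of_int[of "b + 1"] by simp_all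
    ultimately show ?thesis
      using canon_r 0 canon_int_eq_G[of b]
      by (simp add: left_vals_def right_vals_def dyadic_exp_of_int)
  next
    case (Suc j)
    have "odd b" using dyadic_exp_odd_numerator[of r b] b Suc k_def by simp
    then obtain c where c: "b = 2 * c + 1" using oddE by blast
    have "(b - 1) div 2 = c" "(b + 1) div 2 = c + 1" using c by simp_all
    then have "canon r = G [canon_dy c j] [canon_dy (c + 1) j]"
      using canon_r Suc \<open>odd b\<close> by simp
    moreover have "of_int c / 2 ^ j = r - 1 / 2 ^ k" "of_int (c + 1) / 2 ^ j = r + 1 / 2 ^ k"
      using b c Suc by (simp_all add: field_simps)
    ultimately show ?thesis
      by (simp add: left_vals_def right_vals_def Suc k_def[symmetric] canon_dy_eq_canon)
  qed
qed

lemma left_opts_canon: "is_dyadic r \<Longrightarrow> left_opts (canon r) = map canon (left_vals r)"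
  by (subst canon_eq_G) auto

lemma right_opts_canon: "is_dyadic r \<Longrightarrow> right_opts (canon r) = map canon (right_vals r)"
  by (subst canon_eq_G) auto

lemma left_valsD:
  assumes "is_dyadic r" "l \<in> set (left_vals r)"
  shows "is_dyadic l" "l < r" "l \<in> dyadic_grid (dyadic_exp r)"
  using assms dyadic_grid_plus_minus(1)[OF dyadic_exp_grid[OF assms(1)]]
  by (auto simp: left_vals_def is_dyadic_iff_grid split: if_splits)

lemma right_valsD:
  assumes "is_dyadic r" "u \<in> set (right_vals r)"
  shows "is_dyadic u" "r < u" "u \<in> dyadic_grid (dyadic_exp r)"
  using assms dyadic_grid_plus_minus(2)[OF dyadic_exp_grid[OF assms(1)]]
  by (auto simp: right_vals_def is_dyadic_iff_grid split: if_splits)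

lemma size_canon_left_val: "is_dyadic r \<Longrightarrow> l \<in> set (left_vals r) \<Longrightarrow> size (canon l) < size (canon r)"
  using size_left_opt[of "canon l" "canon r"] left_opts_canon by simp

lemma size_canon_right_val: "is_dyadic r \<Longrightarrow> u \<in> set (right_vals r) \<Longrightarrow> size (canon u) < size (canon r)"
  using size_right_opt[of "canon u" "canon r"] right_opts_canon by simp

lemma less_imp_option_between:
  assumes "is_dyadic r" "is_dyadic s" "s < r"
  shows "(\<exists>l\<in>set (left_vals r). s \<le> l) \<or> (\<exists>u\<in>set (right_vals s). u \<le> r)"
proof -
  define e where "e = max (dyadic_exp r) (dyadic_exp s)"
  have "r \<in> dyadic_grid e" "s \<in> dyadic_grid e"
    using dyadic_exp_grid[OF assms(1)] dyadic_exp_grid[OF assms(2)]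
      dyadic_grid_mono[of "dyadic_exp r" e] dyadic_grid_mono[of "dyadic_exp s" e]
    by (auto simp: e_def)
  then have gap: "s \<le> r - 1 / 2 ^ e" using assms(3) by (rule dyadic_grid_less_imp_le_minus)
  have "dyadic_exp r = e \<and> (0 < e \<or> 0 < r) \<or> dyadic_exp s = e \<and> (0 < e \<or> s < 0)"
    using assms(3) by (auto simp: e_def max_def)
  then show ?thesis using gap by (auto simp: left_vals_def right_vals_def)
qed

theorem canon_le_iff:
  "is_dyadic r \<Longrightarrow> is_dyadic s \<Longrightarrow> game_le (canon r) (canon s) \<longleftrightarrow> r \<le> s"
proof (induction "size (canon r) + size (canon s)" arbitrary: r s rule: less_induct)
  case less
  have left: "game_le (canon s) (canon l) \<longleftrightarrow> s \<le> l" if "l \<in> set (left_vals r)" for l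
    using less.hyps[of s l] size_canon_left_val[OF less.prems(1) that]
      left_valsD[OF less.prems(1) that] less.prems by simp
  have right: "game_le (canon u) (canon r) \<longleftrightarrow> u \<le> r" if "u \<in> set (right_vals s)" for u
    using less.hyps[of u r] size_canon_right_val[OF less.prems(2) that]
      right_valsD[OF less.prems(2) that] less.prems by simp
  have "game_le (canon r) (canon s) \<longleftrightarrow>
      (\<forall>l\<in>set (left_vals r). \<not> s \<le> l) \<and> (\<forall>u\<in>set (right_vals s). \<not> u \<le> r)"
    using left right by (subst game_le_iff) (simp add: left_opts_canon right_opts_canon less.prems)
  also have "\<dots> \<longleftrightarrow> r \<le> s"
    using less_imp_option_between[OF less.prems] left_valsD(2)[OF less.prems(1)]
      right_valsD(2)[OF less.prems(2)]
    by (meson not_le order.strict_trans1 order.strict_trans2)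
  finally show ?case .
qed

definition simplest_between :: "rat \<Rightarrow> rat \<Rightarrow> rat \<Rightarrow> bool" where
  "simplest_between x y w \<longleftrightarrow> is_dyadic w \<and> x < w \<and> w < y \<and>
     (\<forall>v\<in>set (left_vals w) \<union> set (right_vals w). v \<le> x \<or> y \<le> v)"

lemma exists_simplest_between:
  assumes closed: "\<And>r v. P r \<Longrightarrow> is_dyadic r \<Longrightarrow> v \<in> set (left_vals r) \<union> set (right_vals r) \<Longrightarrow> P v"
    and "P r" "is_dyadic r" "x < r" "r < y"
  shows "\<exists>w. P w \<and> simplest_between x y w"
  using assms(2-)
proof (induction "size (canon r)" arbitrary: r rule: less_induct)
  case less
  show ?case
  proof (cases "simplest_between x y r")
    case False
    then obtain v where v: "v \<in> set (left_vals r) \<union> set (right_vals r)" "x < v" "v < y"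
      using less.prems by (auto simp: simplest_between_def not_le)
    have "size (canon v) < size (canon r)" "is_dyadic v"
      using v(1) size_canon_left_val[OF less.prems(2)] size_canon_right_val[OF less.prems(2)]
        left_valsD(1)[OF less.prems(2)] right_valsD(1)[OF less.prems(2)] by auto
    moreover have "P v" using closed less.prems(1,2) v(1) .
    ultimately show ?thesis using less.hyps v(2,3) by blast
  qed (use less.prems in blast)
qed

theorem game_eq_canon_simplest:
  assumes "is_dyadic x" "is_dyadic y" "simplest_between x y w"
  shows "game_eq (G [canon x] [canon y]) (canon w)"
proof -
  let ?g = "G [canon x] [canon y]"
  have w: "is_dyadic w" "x < w" "w < y"
    and opts: "\<And>v. v \<in> set (left_vals w) \<union> set (right_vals w) \<Longrightarrow> v \<le> x \<or> y \<le> v"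
    using assms(3) by (auto simp: simplest_between_def)
  have "game_le ?g (canon w)"
  proof (subst game_le_iff, intro conjI ballI notI)
    fix z assume "z \<in> set (left_opts ?g)" "game_le (canon w) z"
    then show False using canon_le_iff[OF w(1) assms(1)] w(2) by simp
  next
    fix z assume "z \<in> set (right_opts (canon w))" and "game_le z ?g"
    then obtain u where u: "u \<in> set (right_vals w)" "z = canon u"
      using right_opts_canon[OF w(1)] by auto
    have "\<not> game_le (canon y) (canon u)" using \<open>game_le z ?g\<close> u(2) by (subst (asm) game_le_iff) simp
    then have "u < y" using canon_le_iff[OF assms(2) right_valsD(1)[OF w(1) u(1)]] by simp
    then show False using opts[of u] u(1) right_valsD(2)[OF w(1) u(1)] w(2) by auto
  qed
  moreover have "game_le (canon w) ?g"
  proof (subst game_le_iff, intro conjI ballI notI)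
    fix z assume "z \<in> set (right_opts ?g)" "game_le z (canon w)"
    then show False using canon_le_iff[OF assms(2) w(1)] w(3) by simp
  next
    fix z assume "z \<in> set (left_opts (canon w))" and "game_le ?g z"
    then obtain l where l: "l \<in> set (left_vals w)" "z = canon l"
      using left_opts_canon[OF w(1)] by auto
    have "\<not> game_le (canon l) (canon x)" using \<open>game_le ?g z\<close> l(2) by (subst (asm) game_le_iff) simp
    then have "x < l" using canon_le_iff[OF left_valsD(1)[OF w(1) l(1)] assms(1)] by simp
    then show False using opts[of l] l(1) left_valsD(2)[OF w(1) l(1)] w(3) by auto
  qed
  ultimately show ?thesis by (simp add: game_eq_def)
qed

section \<open>Balanced balls\<close>

lemma option_in_dyadic_grid:
  assumes "is_dyadic r" "r \<in> dyadic_grid k" "v \<in> set (left_vals r) \<union> set (right_vals r)"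
  shows "v \<in> dyadic_grid k"
  using assms left_valsD(3)[OF assms(1)] right_valsD(3)[OF assms(1)]
    dyadic_grid_mono[OF dyadic_exp_le[OF assms(2)]] by auto

lemma abs_option_less_if_integer:
  assumes "r \<in> dyadic_grid 0" "v \<in> set (left_vals r) \<union> set (right_vals r)"
  shows "\<bar>v\<bar> < \<bar>r\<bar>"
proof -
  obtain b where b: "r = of_int b" using assms(1) by (auto simp: dyadic_grid_def)
  then have "v = of_int (b - 1) \<and> 0 < b \<or> v = of_int (b + 1) \<and> b < 0"
    using assms(2) by (auto simp: left_vals_def right_vals_def dyadic_exp_of_int split: if_splits)
  then show ?thesis using b by auto
qed

lemma beyond_option_if_in_grid:
  assumes m: "is_dyadic m" "m \<noteq> 0"
    and w: "w \<in> dyadic_grid (dyadic_exp m)" "w \<noteq> m" "dyadic_exp m = 0 \<Longrightarrow> \<bar>w\<bar> \<le> \<bar>m\<bar>"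
  shows "(\<exists>l\<in>set (left_vals m). w \<le> l) \<or> (\<exists>u\<in>set (right_vals m). u \<le> w)"
proof -
  define k where "k = dyadic_exp m"
  have grid: "m \<in> dyadic_grid k" "w \<in> dyadic_grid k"
    using dyadic_exp_grid[OF m(1)] w(1) by (simp_all add: k_def)
  have gap: "w \<le> m - 1 / 2 ^ k \<or> m + 1 / 2 ^ k \<le> w"
  proof (cases "w < m")
    case True
    then show ?thesis using dyadic_grid_less_imp_le_minus[OF grid] by simp
  next
    case False
    then have "m < w" using w(2) by simp
    then show ?thesis using dyadic_grid_less_imp_le_minus[OF grid(2,1)] by simp
  qed
  show ?thesis
  proof (cases "0 < k")
    case True
    then show ?thesis using gap by (simp add: left_vals_def right_vals_def k_def)
  next
    case False
    then have "0 < m \<and> w \<le> m - 1 \<or> m < 0 \<and> m + 1 \<le> w" using gap m(2) w(3) by (auto simp: k_def)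
    then show ?thesis using False by (auto simp: left_vals_def right_vals_def k_def)
  qed
qed

lemma obtain_simplest_beyond_option:
  assumes m: "is_dyadic m" "m \<noteq> 0"
    and x: "x < m - 1 / 2 ^ dyadic_exp m" and y: "m + 1 / 2 ^ dyadic_exp m < y"
  obtains w where "simplest_between x y w"
    and "(\<exists>l\<in>set (left_vals m). w \<le> l) \<or> (\<exists>u\<in>set (right_vals m). u \<le> w)"
proof -
  define k where "k = dyadic_exp m"
  \<comment> \<open>For integer \<open>m\<close> the bound on \<open>\<bar>r\<bar>\<close> is needed: e.g. a positive integer has no Right option.\<close>
  define P where "P r \<longleftrightarrow> r \<in> dyadic_grid k \<and> (k = 0 \<longrightarrow> \<bar>r\<bar> \<le> \<bar>m\<bar>)" for r
  have closed: "P v" if "P r" "is_dyadic r" "v \<in> set (left_vals r) \<union> set (right_vals r)" for r v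
  proof -
    have "v \<in> dyadic_grid k"
      using option_in_dyadic_grid[OF that(2) _ that(3)] that(1) by (simp add: P_def)
    moreover have "\<bar>v\<bar> < \<bar>m\<bar>" if "k = 0"
      using abs_option_less_if_integer[of r v] \<open>P r\<close> \<open>v \<in> set _ \<union> _\<close> that by (fastforce simp: P_def)
    ultimately show ?thesis by (auto simp: P_def)
  qed
  have x': "x < m - 1 / 2 ^ k" and y': "m + 1 / 2 ^ k < y" using x y by (simp_all add: k_def)
  moreover have "(0::rat) < 1 / 2 ^ k" by simp
  ultimately have "x < m" "m < y" "m - 1 / 2 ^ k < y" "x < m + 1 / 2 ^ k" by linarith+
  have "P m" using dyadic_exp_grid[OF m(1)] by (simp add: P_def k_def)
  then have "\<exists>w. P w \<and> simplest_between x y w"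
    using closed exists_simplest_between m(1) \<open>x < m\<close> \<open>m < y\<close> by blast
  then obtain w where "P w" and w: "simplest_between x y w" by blast
  have "\<exists>v\<in>set (left_vals m) \<union> set (right_vals m). x < v \<and> v < y"
    using x' y' \<open>m - 1 / 2 ^ k < y\<close> \<open>x < m + 1 / 2 ^ k\<close> m(2)
    by (cases "0 < k \<or> 0 < m") (auto simp: left_vals_def right_vals_def k_def)
  then have "w \<noteq> m" using w unfolding simplest_between_def by force
  with \<open>P w\<close> have "(\<exists>l\<in>set (left_vals m). w \<le> l) \<or> (\<exists>u\<in>set (right_vals m). u \<le> w)"
    using beyond_option_if_in_grid[OF m] by (simp add: P_def k_def)
  with w show ?thesis by (rule that)
qed

lemma not_balanced_if_game_eq_beyond_option:
  assumes m: "is_dyadic m" and w: "is_dyadic w" and gw: "game_eq g (canon w)"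
    and beyond: "(\<exists>l\<in>set (left_vals m). w \<le> l) \<or> (\<exists>u\<in>set (right_vals m). u \<le> w)"
  shows "\<not> game_eq (game_add g g) (game_add (canon m) (canon m))"
  using beyond
proof
  assume "\<exists>l\<in>set (left_vals m). w \<le> l"
  then obtain l where l: "l \<in> set (left_vals m)" "w \<le> l" by blast
  note l_props = left_valsD[OF m l(1)]
  have "canon l \<in> set (left_opts (canon m))" using l(1) by (simp add: left_opts_canon[OF m])
  moreover have "game_le (canon l) (canon m)" using canon_le_iff[OF l_props(1) m] l_props(2) by simp
  moreover have "game_le g (canon l)"
    using gw canon_le_iff[OF w l_props(1)] l(2) game_le_trans by (auto simp: game_eq_def)
  ultimately show ?thesis using not_double_le_if_le_left_opt game_eq_def by blast
next
  assume "\<exists>u\<in>set (right_vals m). u \<le> w"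
  then obtain u where u: "u \<in> set (right_vals m)" "u \<le> w" by blast
  note u_props = right_valsD[OF m u(1)]
  have "canon u \<in> set (right_opts (canon m))" using u(1) by (simp add: right_opts_canon[OF m])
  moreover have "game_le (canon m) (canon u)" using canon_le_iff[OF m u_props(1)] u_props(2) by simp
  moreover have "game_le (canon u) g"
    using gw canon_le_iff[OF u_props(1) w] u(2) game_le_trans by (auto simp: game_eq_def)
  ultimately show ?thesis using not_le_double_if_right_opt_le game_eq_def by blast
qed

theorem proposition2p10:
  fixes m \<Delta> :: rat and a :: int and p :: nat
  assumes "m = of_int a / 2 ^ p"
    and "m \<noteq> 0"
    and "odd a \<or> p = 0"
    and "is_dyadic \<Delta>"
    and "is_number (ball m \<Delta>)"
    and "balanced m \<Delta>"
  shows "- 1 / 2 ^ p \<le> \<Delta> \<and> \<Delta> < 0"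
proof -
  have m: "is_dyadic m" using assms(1) by (auto simp: is_dyadic_def)
  have exp: "dyadic_exp m = p" using assms(1,3) dyadic_exp_of_odd dyadic_exp_of_int by auto
  define x y where "x = m + \<Delta>" and "y = m - \<Delta>"
  have xy: "is_dyadic x" "is_dyadic y" using is_dyadic_add_diff[OF m assms(4)] by (simp_all add: x_def y_def)
  have ball: "ball m \<Delta> = G [canon x] [canon y]" by (simp add: ball_def x_def y_def)
  have "game_le (canon x) (ball m \<Delta>)" "\<not> game_le (canon y) (ball m \<Delta>)"
    using assms(5) by (auto simp: is_number_def ball game_less_def)
  then have "\<not> game_le (canon y) (canon x)" using game_le_trans by blast
  then have "\<Delta> < 0" using canon_le_iff[OF xy(2,1)] by (simp add: x_def y_def)
  moreover have "- 1 / 2 ^ p \<le> \<Delta>"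
  proof (rule ccontr)
    assume "\<not> - 1 / 2 ^ p \<le> \<Delta>"
    then have "x < m - 1 / 2 ^ dyadic_exp m" "m + 1 / 2 ^ dyadic_exp m < y"
      by (simp_all add: exp x_def y_def)
    then obtain w where w: "simplest_between x y w"
      and beyond: "(\<exists>l\<in>set (left_vals m). w \<le> l) \<or> (\<exists>u\<in>set (right_vals m). u \<le> w)"
      using obtain_simplest_beyond_option[OF m assms(2)] by blast
    have "game_eq (ball m \<Delta>) (canon w)" using game_eq_canon_simplest[OF xy w] by (simp add: ball)
    then show False using not_balanced_if_game_eq_beyond_option[OF m _ _ beyond] w assms(6)
      by (auto simp: balanced_def simplest_between_def)
  qed
  ultimately show ?thesis by simp
qed

end
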